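(* Let $m$ be odd and let $f:\mathbb{Z}_m\to\{\pm1,\pm\mathrm{i}\}$ be an OQS. Then $R_f(w)\in\{1,-1\}$ (in particular $R_f(w)$ is real) for all $1\le w\le m-1$.
   Context: $\mathrm{i}=\sqrt{-1}$. For $f:\mathbb{Z}_m\to\mathbb{C}$, $R_f(w)=\sum_{k\in\mathbb{Z}_m}f(k)\overline{f(k+w)}$. A quaternary sequence $f:\mathbb{Z}_m\to\{\pm1,\pm\mathrm{i}\}$ of odd length $m$ is an OQS if $|R_f(w)|=1$ for all $1\le w\le m-1$. *)

theory Defs
  imports Complex_Main
begin

text \<open>Sequences on Z_m are represented as functions on nat, of which only the
values on {0..<m} matter; indices are reduced mod m.\<close>

definition periodic_autocorr :: "nat \<Rightarrow> (nat \<Rightarrow> complex) \<Rightarrow> nat \<Rightarrow> complex" where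
  "periodic_autocorr m f w = (\<Sum>k<m. f k * cnj (f ((k + w) mod m)))"

definition quaternary_seq :: "nat \<Rightarrow> (nat \<Rightarrow> complex) \<Rightarrow> bool" where
  "quaternary_seq m f \<longleftrightarrow> (\<forall>k<m. f k \<in> {1, -1, \<i>, -\<i>})"

definition OQS :: "nat \<Rightarrow> (nat \<Rightarrow> complex) \<Rightarrow> bool" where
  "OQS m f \<longleftrightarrow> odd m \<and> quaternary_seq m f \<and>
     (\<forall>w. 1 \<le> w \<and> w \<le> m - 1 \<longrightarrow> cmod (periodic_autocorr m f w) = 1)"

end

theory Submission
  imports Defs "HOL-Number_Theory.Cong"
begin

text \<open>Each term \<open>f k * cnj (f (k + w))\<close> of the autocorrelation is a unit \<open>\<plusminus>1\<close> or \<open>\<plusminus>\<i>\<close>, and it is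
  imaginary exactly when one of \<open>f k\<close>, \<open>f (k + w)\<close> is real and the other imaginary. Since
  \<open>k \<mapsto> k + w\<close> permutes \<open>\<int>\<^sub>m\<close>, the number of such mismatches is even, so \<open>Im (R\<^sub>f w)\<close> is an even
  integer. An even integer of absolute value at most \<open>|R\<^sub>f w| = 1\<close> vanishes, hence \<open>R\<^sub>f w = \<plusminus>1\<close>.\<close>

lemma bij_betw_add_mod: "bij_betw (\<lambda>k. (k + w) mod m) {..<m} {..<(m::nat)}"
proof -
  have "inj_on (\<lambda>k. (k + w) mod m) {..<m}"
  proof
    fix a b assume "a \<in> {..<m}" "b \<in> {..<m}" "(a + w) mod m = (b + w) mod m"
    then show "a = b"
      using cong_add_rcancel_nat[of a w b m] by (simp add: cong_def)
  qed
  moreover have "(\<lambda>k. (k + w) mod m) ` {..<m} \<subseteq> {..<m}"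
    by (cases "m = 0") auto
  ultimately show ?thesis
    unfolding bij_betw_def by (simp add: endo_inj_surj)
qed

lemma even_card_mismatch:
  fixes P :: "'a \<Rightarrow> bool"
  assumes "finite A" and "bij_betw \<sigma> A A"
  shows "even (card {k\<in>A. P k \<noteq> P (\<sigma> k)})"
proof -
  let ?s = "\<lambda>k. of_bool (P k) + of_bool (P (\<sigma> k)) :: int"
  have "sum ?s A = 2 * (\<Sum>k\<in>A. of_bool (P k))"
    using sum.reindex_bij_betw[OF assms(2), of "\<lambda>k. of_bool (P k) :: int"]
    by (simp only: sum.distrib mult_2)
  then have "even (card {k\<in>A. odd (?s k)})"
    using even_sum_iff[OF assms(1), of ?s] by simp
  moreover have "{k\<in>A. odd (?s k)} = {k\<in>A. P k \<noteq> P (\<sigma> k)}"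
    by auto
  ultimately show ?thesis
    by simp
qed

lemma Im_mult_cnj_unit:
  assumes "a \<in> {1, -1, \<i>, -\<i>}" and "b \<in> {1, -1, \<i>, -\<i>}"
  shows "of_int \<lfloor>Im (a * cnj b)\<rfloor> = Im (a * cnj b)"
    and "odd \<lfloor>Im (a * cnj b)\<rfloor> \<longleftrightarrow> (Im a = 0) \<noteq> (Im b = 0)"
  using assms by (auto simp: floor_minus intro: exI[of _ "-1"])

lemma unit_with_even_Im:
  assumes "cmod z = 1" and "Im z = of_int y" and "even y"
  shows "z \<in> {1, -1}"
proof -
  have "\<bar>of_int y\<bar> \<le> (1::real)"
    using abs_Im_le_cmod[of z] assms(1,2) by simp
  with \<open>even y\<close> have "Im z = 0"
    using assms(2) by (cases "y = 0") (auto simp: abs_if split: if_splits)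
  then have "\<bar>Re z\<bar> = 1"
    using assms(1) by (simp add: cmod_def)
  with \<open>Im z = 0\<close> show ?thesis
    by (auto simp: complex_eq_iff abs_if split: if_splits)
qed

theorem corollary2:
  fixes m :: nat and f :: "nat \<Rightarrow> complex"
  assumes "odd m" and "OQS m f"
  shows "\<forall>w. 1 \<le> w \<and> w \<le> m - 1 \<longrightarrow> periodic_autocorr m f w \<in> {1, -1}"
proof (intro allI impI)
  fix w assume w: "1 \<le> w \<and> w \<le> m - 1"
  define y where "y k = \<lfloor>Im (f k * cnj (f ((k + w) mod m)))\<rfloor>" for k
  have unit: "f k \<in> {1, -1, \<i>, -\<i>}" if "k < m" for k
    using assms(2) that unfolding OQS_def quaternary_seq_def by auto
  have y: "of_int (y k) = Im (f k * cnj (f ((k + w) mod m)))"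
          "odd (y k) \<longleftrightarrow> (Im (f k) = 0) \<noteq> (Im (f ((k + w) mod m)) = 0)" if "k < m" for k
    using Im_mult_cnj_unit[OF unit[OF that] unit[of "(k + w) mod m"]] that
    unfolding y_def by simp_all
  have "Im (periodic_autocorr m f w) = of_int (\<Sum>k<m. y k)"
    unfolding periodic_autocorr_def Im_sum of_int_sum by (rule sum.cong) (simp_all add: y(1))
  moreover have "even (\<Sum>k<m. y k)"
  proof -
    have "even (card {k\<in>{..<m}. (Im (f k) = 0) \<noteq> (Im (f ((k + w) mod m)) = 0)})"
      by (rule even_card_mismatch[OF finite_lessThan bij_betw_add_mod])
    moreover have "{k\<in>{..<m}. odd (y k)} = {k\<in>{..<m}. (Im (f k) = 0) \<noteq> (Im (f ((k + w) mod m)) = 0)}"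
      using y(2) by blast
    ultimately show ?thesis
      by (simp only: even_sum_iff[OF finite_lessThan])
  qed
  moreover have "cmod (periodic_autocorr m f w) = 1"
    using assms(2) w unfolding OQS_def by blast
  ultimately show "periodic_autocorr m f w \<in> {1, -1}"
    using unit_with_even_Im by blast
qed

end
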